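(* There is a $\mathsf{conv}$-MAD family, i.e. a MAD family $\mathcal{A}$ on $\omega$ such that $\mathcal{I}(\mathcal{A})\not\leq_K\mathsf{conv}$.
   Context: A MAD family is a maximal family of infinite subsets of $\omega$ with pairwise finite intersections; $\mathcal{I}(\mathcal{A})$ is the ideal on $\omega$ generated by $\mathcal{A}$ and the finite sets. $\mathsf{conv}$ is the ideal on $[0,1]\cap\mathbb{Q}$ generated by all sequences (of rationals in $[0,1]$) converging to a real number. For an ideal $\mathcal{I}$ on $X$ and $\mathcal{J}$ on $Y$ ($X,Y$ countable), $\mathcal{I}\le_K\mathcal{J}$ means there is $f:Y\to X$ with $f^{-1}(A)\in\mathcal{J}$ for all $A\in\mathcal{I}$. *)

theory Defs
  imports Complex_Main
begin

definition almost_disjoint_family :: "nat set set \<Rightarrow> bool" where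
  "almost_disjoint_family \<A> \<longleftrightarrow>
     (\<forall>a\<in>\<A>. infinite a) \<and> (\<forall>a\<in>\<A>. \<forall>b\<in>\<A>. a \<noteq> b \<longrightarrow> finite (a \<inter> b))"

definition MAD_family :: "nat set set \<Rightarrow> bool" where
  "MAD_family \<A> \<longleftrightarrow>
     almost_disjoint_family \<A> \<and> infinite \<A> \<and>
     (\<forall>B. almost_disjoint_family (insert B \<A>) \<longrightarrow> B \<in> \<A>)"

definition generated_ideal :: "nat set set \<Rightarrow> nat set set" where
  "generated_ideal \<A> =
     {X. \<exists>F. finite F \<and> F \<subseteq> \<A> \<and> finite (X - \<Union>F)}"

definition Q01 :: "rat set" where
  "Q01 = {q. 0 \<le> q \<and> q \<le> 1}"

definition conv_seq :: "(nat \<Rightarrow> rat) \<Rightarrow> bool" where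
  "conv_seq s \<longleftrightarrow> range s \<subseteq> Q01 \<and> (\<exists>x::real. (\<lambda>n. of_rat (s n)) \<longlonglongrightarrow> x)"

definition conv_ideal :: "rat set set" where
  "conv_ideal =
     {X. X \<subseteq> Q01 \<and> (\<exists>S. finite S \<and> (\<forall>s\<in>S. conv_seq s) \<and> X \<subseteq> (\<Union>s\<in>S. range s))}"

definition katetov_le :: "'a set set \<Rightarrow> 'a set \<Rightarrow> 'b set set \<Rightarrow> 'b set \<Rightarrow> bool" where
  "katetov_le I X J Y \<longleftrightarrow>
     (\<exists>f. (\<forall>y\<in>Y. f y \<in> X) \<and> (\<forall>A\<in>I. {y\<in>Y. f y \<in> A} \<in> J))"

end

theory Submission
  imports Defs "HOL-Analysis.Elementary_Metric_Spaces" "HOL-Library.Countable"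
begin

(*
  For a set z of naturals let T_z be the set of partial sums of the ternary expansions with
  digits 0 and 2 whose digit 2j records whether j is in z and whose odd digits are all 2 except
  a single one.  The partial sums with the exceptional digit at 2k+1 increase to pairwise
  distinct limits, so T_z has infinitely many limit points and is not in conv; for z /= z' the
  sets T_z and T_z' eventually stay a fixed distance apart, so they share no limit point.  A
  member of conv has finitely many limit points, hence meets only finitely many T_z in an
  infinite set.

  So for a map f from Q01 to omega whose preimages of finite sets are in conv, and for fewer than
  continuum many sets a with f^-1(a) in conv, some T_z makes f[T_z] almost disjoint from all of
  them, while f^-1(f[T_z]) contains T_z and is not in conv.  A transfinite recursion along a
  well-order of all such maps whose initial segments are smaller than the continuum thus builds
  an almost disjoint family defeating every candidate Katetov reduction, and every MAD family
  extending it is conv-MAD.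
*)

unbundle cardinal_syntax

type_synonym reduction = "rat \<Rightarrow> nat"

section \<open>Limit points of members of conv\<close>

lemma islimpt_separated_sets:
  fixes L :: "'a::metric_space"
  assumes "finite E" "finite E'" "0 < d"
    and sep: "\<And>x y. x \<in> A - E \<Longrightarrow> y \<in> B - E' \<Longrightarrow> d \<le> dist x y"
    and "L islimpt A" "L islimpt B"
  shows False
proof -
  have "L islimpt (E \<union> (A - E))" "L islimpt (E' \<union> (B - E'))"
    using assms(5,6) by (auto intro: islimpt_subset)
  then have "L islimpt (A - E)" "L islimpt (B - E')"
    using assms(1,2) islimpt_Un_finite by blast+
  moreover have "0 < d / 2"
    using \<open>0 < d\<close> by simp
  ultimately obtain x y where "x \<in> A - E" "dist x L < d / 2" "y \<in> B - E'" "dist y L < d / 2"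
    unfolding islimpt_approachable by blast
  moreover have "dist x y \<le> dist x L + dist y L"
    by (rule dist_triangle2)
  ultimately show False
    using sep[of x y] by linarith
qed

lemma Q01_infinite_imp_limpt:
  assumes "X \<subseteq> Q01" "infinite X"
  obtains L where "L islimpt real_of_rat ` X"
proof -
  have "real_of_rat ` X \<subseteq> {0..1}"
    using assms(1) by (auto simp: Q01_def)
  then have "bounded (real_of_rat ` X)"
    unfolding bounded_iff by (intro exI[of _ 1]) auto
  moreover have "infinite (real_of_rat ` X)"
    using assms(2) by (simp add: finite_image_iff inj_on_def)
  ultimately show ?thesis
    using bounded_infinite_imp_islimpt that by blast
qed

lemma conv_ideal_subset:
  assumes "X \<in> conv_ideal" "Y \<subseteq> X"
  shows "Y \<in> conv_ideal"
proof -
  obtain S where "X \<subseteq> Q01" "finite S" "\<forall>s\<in>S. conv_seq s" "X \<subseteq> (\<Union>s\<in>S. range s)"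
    using assms(1) unfolding conv_ideal_def by blast
  with assms(2) show ?thesis
    unfolding conv_ideal_def by (intro CollectI conjI exI[of _ S]) auto
qed

lemma conv_ideal_finite_limpts:
  assumes "X \<in> conv_ideal"
  shows "finite {L. L islimpt real_of_rat ` X}"
proof -
  obtain S where S: "finite S" "\<forall>s\<in>S. conv_seq s" "X \<subseteq> (\<Union>s\<in>S. range s)"
    using assms unfolding conv_ideal_def by blast
  have "{L. L islimpt real_of_rat ` X} \<subseteq> (\<lambda>s. lim (\<lambda>n. real_of_rat (s n))) ` S"
  proof
    fix L assume "L \<in> {L. L islimpt real_of_rat ` X}"
    then have "L islimpt real_of_rat ` X" by simp
    moreover have "real_of_rat ` X \<subseteq> (\<Union>s\<in>S. range (\<lambda>n. real_of_rat (s n)))"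
      using image_mono[OF S(3), of real_of_rat] by (simp add: image_UN image_image)
    ultimately have "L islimpt (\<Union>s\<in>S. range (\<lambda>n. real_of_rat (s n)))"
      by (rule islimpt_subset)
    then obtain s where s: "s \<in> S" "L islimpt range (\<lambda>n. real_of_rat (s n))"
      using islimpt_finite_union_iff[OF S(1), of L "\<lambda>s. range (\<lambda>n. real_of_rat (s n))"] by blast
    have "(\<lambda>n. real_of_rat (s n)) \<longlonglongrightarrow> lim (\<lambda>n. real_of_rat (s n))"
      using S(2) s(1) limI unfolding conv_seq_def by blast
    then show "L \<in> (\<lambda>s. lim (\<lambda>n. real_of_rat (s n))) ` S"
      using sequence_unique_limpt s by blast
  qed
  then show ?thesis
    using S(1) finite_subset by blast
qed

section \<open>Ternary partial sums\<close>

definition cantor_sum :: "(nat \<Rightarrow> bool) \<Rightarrow> nat \<Rightarrow> rat" where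
  "cantor_sum b m = (\<Sum>i<m. if b i then 2 / 3 ^ Suc i else 0)"

lemma cantor_sum_Suc:
  "cantor_sum b (Suc m) = cantor_sum b m + (if b m then 2 / 3 ^ Suc m else 0)"
  unfolding cantor_sum_def by simp

lemma cantor_sum_cong: "(\<And>i. i < m \<Longrightarrow> b i = b' i) \<Longrightarrow> cantor_sum b m = cantor_sum b' m"
  unfolding cantor_sum_def by (rule sum.cong) auto

lemma cantor_sum_increment_bounds:
  assumes "n \<le> m"
  shows "0 \<le> cantor_sum b m - cantor_sum b n \<and> cantor_sum b m - cantor_sum b n \<le> 1 / 3 ^ n - 1 / 3 ^ m"
  using assms
proof (induction m rule: dec_induct)
  case base
  then show ?case by simp
next
  case (step m)
  have "(1::rat) / 3 ^ n - 1 / 3 ^ m + 2 / 3 ^ Suc m = 1 / 3 ^ n - 1 / 3 ^ Suc m"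
    "(1::rat) / 3 ^ Suc m \<le> 1 / 3 ^ m"
    by (simp_all add: field_simps)
  with step.IH show ?case
    by (cases "b m") (simp_all add: cantor_sum_Suc)
qed

lemma cantor_sum_mono: "n \<le> m \<Longrightarrow> cantor_sum b n \<le> cantor_sum b m"
  using cantor_sum_increment_bounds[of n m b] by simp

lemma cantor_sum_Q01: "cantor_sum b m \<in> Q01"
proof -
  have "0 \<le> cantor_sum b m" "cantor_sum b m \<le> 1 - 1 / 3 ^ m"
    using cantor_sum_increment_bounds[of 0 m b] by (simp_all add: cantor_sum_def)
  moreover have "(0::rat) < 1 / 3 ^ m"
    by simp
  ultimately show ?thesis
    unfolding Q01_def mem_Collect_eq by linarith
qed

lemma cantor_sum_first_difference:
  assumes "b j \<noteq> b' j" "\<And>i. i < j \<Longrightarrow> b i = b' i" "j < m" "j < m'"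
  shows "1 / 3 ^ Suc j < \<bar>cantor_sum b m - cantor_sum b' m'\<bar>"
proof -
  have same_prefix: "cantor_sum b j = cantor_sum b' j"
    using cantor_sum_cong assms(2) by blast
  have tail: "0 \<le> cantor_sum c k - cantor_sum c (Suc j)"
    "cantor_sum c k - cantor_sum c (Suc j) < 1 / 3 ^ Suc j" if "j < k" for c k
  proof -
    have "(0::rat) < 1 / 3 ^ k"
      by simp
    moreover have "0 \<le> cantor_sum c k - cantor_sum c (Suc j) \<and>
        cantor_sum c k - cantor_sum c (Suc j) \<le> 1 / 3 ^ Suc j - 1 / 3 ^ k"
      using that by (intro cantor_sum_increment_bounds) simp
    ultimately show "0 \<le> cantor_sum c k - cantor_sum c (Suc j)"
      "cantor_sum c k - cantor_sum c (Suc j) < 1 / 3 ^ Suc j"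
      by linarith+
  qed
  show ?thesis
    using assms(1) tail[OF assms(3), of b] tail[OF assms(4), of b']
    by (cases "b j") (simp_all add: cantor_sum_Suc same_prefix)
qed

lemma cantor_sum_separation:
  assumes "j \<le> J" "b j \<noteq> b' j" "J < m" "J < m'"
  shows "1 / 3 ^ Suc J \<le> dist (real_of_rat (cantor_sum b m)) (real_of_rat (cantor_sum b' m'))"
proof -
  obtain j0 where j0: "b j0 \<noteq> b' j0" "\<And>i. i < j0 \<Longrightarrow> b i = b' i" "j0 \<le> j"
    using exists_least_iff[of "\<lambda>i. b i \<noteq> b' i"] assms(2) by (metis not_le_imp_less)
  have "(1::rat) / 3 ^ Suc J \<le> 1 / 3 ^ Suc j0"
    using j0(3) assms(1) by (intro divide_left_mono power_increasing) auto
  also have "\<dots> < \<bar>cantor_sum b m - cantor_sum b' m'\<bar>"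
    using cantor_sum_first_difference[of b j0 b' m m', OF j0(1,2)] j0(3) assms by simp
  finally have "real_of_rat (1 / 3 ^ Suc J) \<le> real_of_rat \<bar>cantor_sum b m - cantor_sum b' m'\<bar>"
    by (simp add: of_rat_less_eq)
  then show ?thesis
    by (simp add: dist_real_def of_rat_divide of_rat_power of_rat_mult of_rat_diff flip: abs_of_rat)
qed

lemma finite_cantor_sums_below: "finite {cantor_sum b m | b m. m \<le> J}"
proof -
  have "{cantor_sum b m | b m. m \<le> J} \<subseteq>
      (\<lambda>(s, m). cantor_sum (\<lambda>i. i \<in> s) m) ` (Pow {..<J} \<times> {..J})"
  proof clarify
    fix b m assume "m \<le> J"
    then show "cantor_sum b m \<in> (\<lambda>(s, m). cantor_sum (\<lambda>i. i \<in> s) m) ` (Pow {..<J} \<times> {..J})"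
      using cantor_sum_cong[of m b "\<lambda>i. i \<in> {i. i < m \<and> b i}"]
      by (intro image_eqI[where x = "({i. i < m \<and> b i}, m)"]) auto
  qed
  then show ?thesis
    by (rule finite_subset) simp
qed

lemma cantor_sums_no_common_limpt:
  assumes X: "X \<subseteq> {cantor_sum b m | b m. P b}" and Y: "Y \<subseteq> {cantor_sum b m | b m. Q b}"
    and PQ: "\<And>b b'. P b \<Longrightarrow> Q b' \<Longrightarrow> b J \<noteq> b' J"
    and "L islimpt real_of_rat ` X" "L islimpt real_of_rat ` Y"
  shows False
proof (rule islimpt_separated_sets)
  let ?E = "real_of_rat ` {cantor_sum b m | b m. m \<le> J}"
  show "finite ?E"
    using finite_cantor_sums_below by simp
  show "1 / 3 ^ Suc J \<le> dist x y" if x_in: "x \<in> real_of_rat ` X - ?E" and y_in: "y \<in> real_of_rat ` Y - ?E" for x y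
  proof -
    obtain b m where x: "x = real_of_rat (cantor_sum b m)" "P b"
      using x_in X by blast
    obtain b' m' where y: "y = real_of_rat (cantor_sum b' m')" "Q b'"
      using y_in Y by blast
    have "\<not> m \<le> J" "\<not> m' \<le> J"
      using x_in y_in x(1) y(1) by blast+
    then show ?thesis
      using cantor_sum_separation[of J J b b' m m'] PQ x y by simp
  qed
qed (use assms finite_cantor_sums_below in simp_all)


lemma cantor_sum_limpt:
  assumes "\<And>n. \<exists>j\<ge>n. b j"
  obtains L where "L islimpt real_of_rat ` range (cantor_sum b)"
proof -
  let ?x = "\<lambda>m. real_of_rat (cantor_sum b m)"
  have "incseq ?x"
    by (rule incseq_SucI) (simp add: of_rat_less_eq cantor_sum_mono)
  moreover have "\<forall>m. ?x m \<le> 1"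
    using cantor_sum_Q01[of b] by (simp add: Q01_def of_rat_less_eq[of _ 1, simplified])
  ultimately obtain L where L: "?x \<longlonglongrightarrow> L" "\<And>m. ?x m \<le> L"
    using incseq_convergent by metis
  have "?x m < L" for m
  proof -
    obtain j where "m \<le> j" "b j"
      using assms by blast
    then have "cantor_sum b (Suc j) = cantor_sum b j + 2 / 3 ^ Suc j"
      by (simp add: cantor_sum_Suc)
    moreover have "0 < (2::rat) / 3 ^ Suc j"
      by simp
    ultimately have "cantor_sum b m < cantor_sum b (Suc j)"
      using cantor_sum_mono[OF \<open>m \<le> j\<close>, of b] by linarith
    then show ?thesis
      by (meson L(2) less_le_trans of_rat_less)
  qed
  with L(1) have "L islimpt range ?x"
    unfolding islimpt_sequential by (intro exI[of _ ?x]) auto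
  then show ?thesis
    using that by (simp add: image_image)
qed

definition block_digits :: "nat set \<Rightarrow> nat \<Rightarrow> nat \<Rightarrow> bool" where
  "block_digits z k j = (if even j then j div 2 \<in> z else j div 2 \<noteq> k)"

definition cantor_block :: "nat set \<Rightarrow> rat set" where
  "cantor_block z = (\<Union>k. range (cantor_sum (block_digits z k)))"

lemma cantor_block_Q01: "cantor_block z \<subseteq> Q01"
  using cantor_sum_Q01 by (auto simp: cantor_block_def)

lemma cantor_block_limpts_disjoint:
  assumes "z \<noteq> z'" "L islimpt real_of_rat ` cantor_block z" "L islimpt real_of_rat ` cantor_block z'"
  shows False
proof -
  obtain p where p: "(p \<in> z) \<noteq> (p \<in> z')"
    using assms(1) by blast
  show False
  proof (rule cantor_sums_no_common_limpt[where J = "2 * p"])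
    show "cantor_block z \<subseteq> {cantor_sum b m | b m. \<exists>k. b = block_digits z k}"
      "cantor_block z' \<subseteq> {cantor_sum b m | b m. \<exists>k. b = block_digits z' k}"
      by (auto simp: cantor_block_def)
  qed (use assms p in \<open>auto simp: block_digits_def\<close>)
qed

lemma cantor_block_not_conv: "cantor_block z \<notin> conv_ideal"
proof
  assume conv: "cantor_block z \<in> conv_ideal"
  have "\<exists>L. L islimpt real_of_rat ` range (cantor_sum (block_digits z k))" for k
  proof (rule cantor_sum_limpt)
    show "\<exists>j\<ge>n. block_digits z k j" for n
      by (intro exI[of _ "Suc (2 * (Suc n + k))"]) (simp add: block_digits_def)
  qed blast
  then obtain L where L: "\<And>k. L k islimpt real_of_rat ` range (cantor_sum (block_digits z k))"
    by metis
  have "inj L"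
  proof (rule injI, rule ccontr)
    fix k k' assume "L k = L k'" "k \<noteq> k'"
    show False
    proof (rule cantor_sums_no_common_limpt)
      show "range (cantor_sum (block_digits z k)) \<subseteq> {cantor_sum b m | b m. b = block_digits z k}"
        "range (cantor_sum (block_digits z k')) \<subseteq> {cantor_sum b m | b m. b = block_digits z k'}"
        by blast+
      show "b (Suc (2 * k)) \<noteq> b' (Suc (2 * k))"
        if "b = block_digits z k" "b' = block_digits z k'" for b b'
        using that \<open>k \<noteq> k'\<close> by (simp add: block_digits_def)
    qed (use L[of k] L[of k'] \<open>L k = L k'\<close> in simp_all)
  qed
  moreover have "range L \<subseteq> {L. L islimpt real_of_rat ` cantor_block z}"
  proof (rule image_subsetI, rule CollectI)
    fix k
    show "L k islimpt real_of_rat ` cantor_block z"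
      using L[of k] by (rule islimpt_subset) (auto simp: cantor_block_def)
  qed
  ultimately have "finite (UNIV :: nat set)"
    using conv_ideal_finite_limpts[OF conv] by (meson finite_imageD finite_subset)
  then show False
    by simp
qed

lemma conv_ideal_meets_finitely_many_blocks:
  assumes "X \<in> conv_ideal"
  shows "finite {z. infinite (X \<inter> cantor_block z)}"
proof -
  let ?Z = "{z. infinite (X \<inter> cantor_block z)}"
  have "\<exists>L. L islimpt real_of_rat ` (X \<inter> cantor_block z)" if "z \<in> ?Z" for z
    using Q01_infinite_imp_limpt[of "X \<inter> cantor_block z"] that cantor_block_Q01[of z] by blast
  then obtain L where L: "\<And>z. z \<in> ?Z \<Longrightarrow> L z islimpt real_of_rat ` (X \<inter> cantor_block z)"
    by metis
  have L_X: "L z islimpt real_of_rat ` X" and L_block: "L z islimpt real_of_rat ` cantor_block z"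
    if "z \<in> ?Z" for z
    using L[OF that] by (meson Int_lower1 Int_lower2 image_mono islimpt_subset)+
  have "inj_on L ?Z"
  proof (rule inj_onI, rule ccontr)
    fix z z' assume "z \<in> ?Z" "z' \<in> ?Z" "L z = L z'" "z \<noteq> z'"
    then show False
      using cantor_block_limpts_disjoint L_block by metis
  qed
  moreover have "L ` ?Z \<subseteq> {L. L islimpt real_of_rat ` X}"
    using L_X by blast
  ultimately show ?thesis
    using conv_ideal_finite_limpts[OF assms] by (meson finite_imageD finite_subset)
qed

section \<open>Escaping a single reduction\<close>

lemma card_of_UN_finite_ordLess:
  assumes "infinite U" "|S| <o |U|" "\<And>a. a \<in> S \<Longrightarrow> finite (B a)"
  shows "|\<Union>a\<in>S. B a| <o |U|"
proof (cases "finite S")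
  case True
  then have "finite (\<Union>a\<in>S. B a)"
    using assms(3) by blast
  then show ?thesis
    using finite_ordLess_infinite[OF card_of_Well_order card_of_Well_order] assms(1)
    by (simp add: Field_card_of)
next
  case False
  have "|B a| \<le>o |S|" if "a \<in> S" for a
    using finite_ordLess_infinite[OF card_of_Well_order card_of_Well_order] assms(3)[OF that] False
    by (simp add: Field_card_of) (blast intro: ordLess_imp_ordLeq)
  then have "|\<Union>a\<in>S. B a| \<le>o |S|"
    using card_of_UNION_ordLeq_infinite[OF False ordLeq_refl[OF card_of_Card_order]] by blast
  then show ?thesis
    using assms(2) by (rule ordLeq_ordLess_trans)
qed

lemma infinite_nat_set_set: "infinite (UNIV :: nat set set)"
  by (metis Pow_UNIV finite_Pow_iff infinite_UNIV_nat)

lemma exists_escaping_set: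
  fixes f :: reduction
  assumes finite_conv: "\<And>F. finite F \<Longrightarrow> Q01 \<inter> f -` F \<in> conv_ideal"
    and card: "|S| <o |UNIV :: nat set set|"
    and conv: "\<And>a. a \<in> S \<Longrightarrow> Q01 \<inter> f -` a \<in> conv_ideal"
  obtains a where "infinite a" "\<And>b. b \<in> S \<Longrightarrow> finite (a \<inter> b)" "Q01 \<inter> f -` a \<notin> conv_ideal"
proof -
  define meets where "meets a = {z. infinite (Q01 \<inter> f -` a \<inter> cantor_block z)}" for a
  have "|\<Union>a\<in>S. meets a| <o |UNIV :: nat set set|"
    using infinite_nat_set_set card conv_ideal_meets_finitely_many_blocks[OF conv]
    unfolding meets_def by (rule card_of_UN_finite_ordLess)
  then have "(\<Union>a\<in>S. meets a) \<noteq> UNIV"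
    using ordLess_irreflexive by fastforce
  then obtain z where z: "\<And>b. b \<in> S \<Longrightarrow> finite (Q01 \<inter> f -` b \<inter> cantor_block z)"
    unfolding meets_def by blast
  define a where "a = f ` cantor_block z"
  have "cantor_block z \<subseteq> Q01 \<inter> f -` a"
    using cantor_block_Q01 by (auto simp: a_def)
  then have not_conv: "Q01 \<inter> f -` a \<notin> conv_ideal"
    using conv_ideal_subset cantor_block_not_conv by blast
  show ?thesis
  proof
    show "infinite a"
      using finite_conv not_conv by blast
    show "finite (a \<inter> b)" if "b \<in> S" for b
    proof (rule finite_subset)
      show "a \<inter> b \<subseteq> f ` (Q01 \<inter> f -` b \<inter> cantor_block z)"
        using cantor_block_Q01 by (auto simp: a_def)
      show "finite (f ` (Q01 \<inter> f -` b \<inter> cantor_block z))"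
        using z[OF that] by blast
    qed
  qed (rule not_conv)
qed

section \<open>Recursion over all reductions\<close>

lemma card_of_reductions: "|UNIV :: reduction set| \<le>o |UNIV :: nat set set|"
proof -
  have "inj (\<lambda>g :: reduction. range (\<lambda>q. to_nat (q, g q)))"
  proof (rule injI, rule ext)
    fix g g' :: reduction and q
    assume "range (\<lambda>q. to_nat (q, g q)) = range (\<lambda>q. to_nat (q, g' q))"
    moreover have "to_nat (q, g q) \<in> range (\<lambda>q. to_nat (q, g q))"
      by (rule rangeI)
    ultimately obtain q' where "to_nat (q, g q) = to_nat (q', g' q')"
      by auto
    then show "g q = g' q"
      by auto
  qed
  then show ?thesis
    using card_of_ordLeq[of UNIV UNIV] by blast
qed

(* The columns keep the constructed family infinite however few sets the recursion adds. *)
definition column :: "nat \<Rightarrow> nat set" where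
  "column k = {n. fst (prod_decode n) = k}"

lemma infinite_column: "infinite (column k)"
proof
  assume "finite (column k)"
  moreover have "range (\<lambda>m. prod_encode (k, m)) \<subseteq> column k"
    by (auto simp: column_def)
  ultimately have "finite (range (\<lambda>m. prod_encode (k, m)))"
    by (rule finite_subset[rotated])
  moreover have "inj (\<lambda>m. prod_encode (k, m))"
    by (simp add: inj_def)
  ultimately show False
    using finite_imageD by blast
qed

lemma column_disjoint: "k \<noteq> k' \<Longrightarrow> column k \<inter> column k' = {}"
  by (auto simp: column_def)

lemma inj_column: "inj column"
  by (metis column_disjoint infinite_column Int_absorb finite.emptyI injI)

lemma card_of_range_column: "|range column| <o |UNIV :: nat set set|"
  using card_of_image[of column UNIV] card_of_Pow[of "UNIV :: nat set"]
  by (simp add: ordLeq_ordLess_trans)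

(* Every proper initial segment of this well-order is smaller than the set of all reductions,
   hence smaller than the continuum. *)
abbreviation reduction_order :: "reduction rel" where
  "reduction_order \<equiv> |UNIV :: reduction set|"

lemma wo_rel_reduction_order: "wo_rel reduction_order"
  by (rule Card_order_wo_rel[OF card_of_Card_order])

definition earlier_sets :: "(reduction \<Rightarrow> nat set option) \<Rightarrow> reduction \<Rightarrow> nat set set" where
  "earlier_sets D f = range column \<union> {a. \<exists>g\<in>underS reduction_order f. D g = Some a}"

definition escaping_sets :: "(reduction \<Rightarrow> nat set option) \<Rightarrow> reduction \<Rightarrow> nat set set" where
  "escaping_sets D f =
     {a. infinite a \<and> (\<forall>b\<in>earlier_sets D f. finite (a \<inter> b)) \<and> Q01 \<inter> f -` a \<notin> conv_ideal}"

definition choose_escaping :: "(reduction \<Rightarrow> nat set option) \<Rightarrow> reduction \<Rightarrow> nat set option" where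
  "choose_escaping D f =
     (if escaping_sets D f = {} then None else Some (SOME a. a \<in> escaping_sets D f))"

definition diagonal_choice :: "reduction \<Rightarrow> nat set option" where
  "diagonal_choice = wo_rel.worec reduction_order choose_escaping"

definition diagonal_family :: "nat set set" where
  "diagonal_family = range column \<union> {a. \<exists>g. diagonal_choice g = Some a}"

lemma card_of_earlier_sets: "|earlier_sets D f| <o |UNIV :: nat set set|"
proof -
  have "earlier_sets D f \<subseteq> range column \<union> (the \<circ> D) ` underS reduction_order f"
    unfolding earlier_sets_def by force
  moreover have "|(the \<circ> D) ` underS reduction_order f| <o |UNIV :: nat set set|"
  proof -
    have "|(the \<circ> D) ` underS reduction_order f| \<le>o |underS reduction_order f|"
      by (rule card_of_image)
    moreover have "|underS reduction_order f| <o reduction_order"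
      by (rule card_of_underS[OF card_of_Card_order]) (simp add: Field_card_of)
    ultimately show ?thesis
      using card_of_reductions ordLeq_ordLess_trans ordLess_ordLeq_trans by metis
  qed
  ultimately show ?thesis
    using card_of_Un_ordLess_infinite[OF infinite_nat_set_set card_of_range_column]
      card_of_mono1 ordLeq_ordLess_trans by metis
qed

lemma diagonal_choice_eq: "diagonal_choice f = choose_escaping diagonal_choice f"
proof -
  have "choose_escaping D f = choose_escaping D' f"
    if "\<forall>g\<in>underS reduction_order f. D g = D' g" for D D' f
  proof -
    have "earlier_sets D f = earlier_sets D' f"
      using that unfolding earlier_sets_def by force
    then show ?thesis
      by (simp add: choose_escaping_def escaping_sets_def)
  qed
  then have "wo_rel.adm_wo reduction_order choose_escaping"
    unfolding wo_rel.adm_wo_def[OF wo_rel_reduction_order] by blast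
  then show ?thesis
    using wo_rel.worec_fixpoint[OF wo_rel_reduction_order] unfolding diagonal_choice_def by metis
qed

lemma diagonal_choice_escaping:
  assumes "diagonal_choice f = Some a"
  shows "a \<in> escaping_sets diagonal_choice f"
proof -
  have "escaping_sets diagonal_choice f \<noteq> {}" "a = (SOME a. a \<in> escaping_sets diagonal_choice f)"
    using assms by (subst (asm) diagonal_choice_eq, simp add: choose_escaping_def split: if_splits)+
  then show ?thesis
    using some_in_eq by metis
qed

lemma diagonal_choice_exists: "escaping_sets diagonal_choice f \<noteq> {} \<Longrightarrow> \<exists>a. diagonal_choice f = Some a"
  by (subst diagonal_choice_eq) (simp add: choose_escaping_def)

lemma diagonal_family_defeats:
  assumes "\<And>F. finite F \<Longrightarrow> Q01 \<inter> f -` F \<in> conv_ideal"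
  obtains a where "a \<in> diagonal_family" "Q01 \<inter> f -` a \<notin> conv_ideal"
proof (cases "\<forall>a\<in>earlier_sets diagonal_choice f. Q01 \<inter> f -` a \<in> conv_ideal")
  case True
  have "escaping_sets diagonal_choice f \<noteq> {}"
  proof (rule exists_escaping_set[OF assms card_of_earlier_sets[of diagonal_choice f]])
    show "Q01 \<inter> f -` a \<in> conv_ideal" if "a \<in> earlier_sets diagonal_choice f" for a
      using True that by blast
  qed (auto simp: escaping_sets_def)
  then obtain a where "diagonal_choice f = Some a"
    using diagonal_choice_exists by blast
  then show ?thesis
    using diagonal_choice_escaping[of f a] that by (auto simp: diagonal_family_def escaping_sets_def)
next
  case False
  then show ?thesis
    using that unfolding earlier_sets_def diagonal_family_def by blast
qed

lemma diagonal_choice_almost_disjoint: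
  assumes "diagonal_choice g = Some a" "b \<in> diagonal_family" "b \<noteq> a"
  shows "finite (a \<inter> b)"
proof -
  have earlier: "finite (a' \<inter> b')"
    if "diagonal_choice g' = Some a'" "b' \<in> earlier_sets diagonal_choice g'" for a' b' g'
    using diagonal_choice_escaping[OF that(1)] that(2) by (simp add: escaping_sets_def)
  show ?thesis
  proof (cases "b \<in> range column")
    case True
    then show ?thesis
      using earlier[OF assms(1)] by (simp add: earlier_sets_def)
  next
    case False
    then obtain g' where g': "diagonal_choice g' = Some b"
      using assms(2) unfolding diagonal_family_def by blast
    then have "g' \<noteq> g"
      using assms by auto
    moreover have "(g', g) \<in> reduction_order \<or> (g, g') \<in> reduction_order"
      using wo_rel.TOTALS[OF wo_rel_reduction_order] by (simp add: Field_card_of)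
    ultimately have "g' \<in> underS reduction_order g \<or> g \<in> underS reduction_order g'"
      unfolding underS_def by blast
    then show ?thesis
    proof
      assume "g' \<in> underS reduction_order g"
      then have "b \<in> earlier_sets diagonal_choice g"
        using g' unfolding earlier_sets_def by blast
      then show ?thesis
        using earlier[OF assms(1)] by blast
    next
      assume "g \<in> underS reduction_order g'"
      then have "a \<in> earlier_sets diagonal_choice g'"
        using assms(1) unfolding earlier_sets_def by blast
      then have "finite (b \<inter> a)"
        using earlier[OF g'] by blast
      then show ?thesis
        by (simp add: Int_commute)
    qed
  qed
qed

lemma diagonal_family_almost_disjoint: "almost_disjoint_family diagonal_family"
  unfolding almost_disjoint_family_def
proof (intro conjI ballI impI)
  fix a assume "a \<in> diagonal_family"
  then show "infinite a"
    using infinite_column diagonal_choice_escaping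
    by (auto simp: diagonal_family_def escaping_sets_def)
next
  fix a b assume a: "a \<in> diagonal_family" and b: "b \<in> diagonal_family" and "a \<noteq> b"
  show "finite (a \<inter> b)"
  proof (cases "a \<in> range column \<and> b \<in> range column")
    case True
    then obtain k k' where k: "a = column k" "b = column k'"
      by blast
    with \<open>a \<noteq> b\<close> have "k \<noteq> k'"
      by blast
    then show ?thesis
      using column_disjoint k by simp
  next
    case False
    then consider g where "diagonal_choice g = Some a" | g where "diagonal_choice g = Some b"
      using a b unfolding diagonal_family_def by blast
    then show ?thesis
      using diagonal_choice_almost_disjoint a b \<open>a \<noteq> b\<close> by cases (metis Int_commute)+
  qed
qed

lemma infinite_diagonal_family: "infinite diagonal_family"
  using finite_imageD[OF _ inj_column] finite_subset[of "range column" diagonal_family]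
  unfolding diagonal_family_def by auto

section \<open>Extension to a MAD family\<close>

lemma almost_disjoint_family_chain_Union:
  assumes "chain\<^sub>\<subseteq> C" "\<And>A. A \<in> C \<Longrightarrow> almost_disjoint_family A"
  shows "almost_disjoint_family (\<Union>C)"
  unfolding almost_disjoint_family_def
proof (intro conjI ballI impI)
  fix a assume "a \<in> \<Union>C"
  then show "infinite a"
    using assms(2) unfolding almost_disjoint_family_def by blast
next
  fix a b assume "a \<in> \<Union>C" "b \<in> \<Union>C" "a \<noteq> b"
  then obtain A B where AB: "A \<in> C" "B \<in> C" "a \<in> A" "b \<in> B"
    by blast
  with assms(1) have "a \<in> B \<and> b \<in> B \<or> a \<in> A \<and> b \<in> A"
    unfolding chain_subset_def by blast
  with AB show "finite (a \<inter> b)"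
    using assms(2) \<open>a \<noteq> b\<close> unfolding almost_disjoint_family_def by blast
qed

lemma almost_disjoint_family_extends_to_MAD:
  assumes "almost_disjoint_family A" "infinite A"
  obtains M where "MAD_family M" "A \<subseteq> M"
proof -
  let ?F = "{B. almost_disjoint_family B \<and> A \<subseteq> B}"
  have "\<exists>U\<in>?F. \<forall>B\<in>C. B \<subseteq> U" if "C \<in> chains ?F" for C
  proof (cases "C = {}")
    case True
    then show ?thesis
      using assms(1) by blast
  next
    case False
    have "chain\<^sub>\<subseteq> C" "C \<subseteq> ?F"
      using that unfolding chains_def by blast+
    then have "\<Union>C \<in> ?F"
      using False almost_disjoint_family_chain_Union by blast
    then show ?thesis
      by blast
  qed
  then have "\<exists>M\<in>?F. \<forall>B\<in>?F. M \<subseteq> B \<longrightarrow> B = M"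
    by (intro Zorn_Lemma2) blast
  then obtain M where "M \<in> ?F" and max: "\<forall>B\<in>?F. M \<subseteq> B \<longrightarrow> B = M"
    by (rule bexE)
  then have M: "almost_disjoint_family M" "A \<subseteq> M"
    by simp_all
  have "MAD_family M"
    unfolding MAD_family_def
  proof (intro conjI allI impI)
    show "infinite M"
      using M(2) assms(2) finite_subset by auto
    show "B \<in> M" if "almost_disjoint_family (insert B M)" for B
    proof -
      have "insert B M \<in> ?F"
        using that M(2) by auto
      then have "insert B M = M"
        using max by (simp add: subset_insertI)
      then show ?thesis
        by auto
    qed
  qed (rule M(1))
  then show ?thesis
    using M(2) by (rule that)
qed

lemma finite_in_generated_ideal: "finite F \<Longrightarrow> F \<in> generated_ideal A"
  unfolding generated_ideal_def by (intro CollectI exI[of _ "{}"]) simp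

lemma member_in_generated_ideal: "a \<in> A \<Longrightarrow> a \<in> generated_ideal A"
  unfolding generated_ideal_def by (intro CollectI exI[of _ "{a}"]) simp

theorem mainTheorem7:
  shows "\<exists>\<A>. MAD_family \<A> \<and> \<not> katetov_le (generated_ideal \<A>) UNIV conv_ideal Q01"
proof -
  obtain M where M: "MAD_family M" "diagonal_family \<subseteq> M"
    using almost_disjoint_family_extends_to_MAD[OF diagonal_family_almost_disjoint
        infinite_diagonal_family] .
  have "\<not> katetov_le (generated_ideal M) UNIV conv_ideal Q01"
  proof
    assume "katetov_le (generated_ideal M) UNIV conv_ideal Q01"
    then obtain f :: reduction
      where "\<forall>A\<in>generated_ideal M. {q \<in> Q01. f q \<in> A} \<in> conv_ideal"
      unfolding katetov_le_def by blast
    then have f: "Q01 \<inter> f -` A \<in> conv_ideal" if "A \<in> generated_ideal M" for A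
      using that by (simp add: Int_def vimage_def)
    obtain a where "a \<in> diagonal_family" "Q01 \<inter> f -` a \<notin> conv_ideal"
      using diagonal_family_defeats[OF f[OF finite_in_generated_ideal]] .
    with M(2) show False
      using f member_in_generated_ideal by blast
  qed
  with M(1) show ?thesis
    by blast
qed

end
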